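(* If a Tychonoff space $X$ contains an infinite discrete clopen subset, then $X$ does not have CSHP.
   Context: For a Tychonoff space $Y$, $\operatorname{Homeo}_{cpt}(Y)$ is the group of homeomorphisms of $Y$ with compact support $\operatorname{cl}_Y\{y\mid h(y)\neq y\}$; each extends to a homeomorphism of $\beta Y$ that is the identity on $\beta Y\setminus Y$, and $\operatorname{Homeo}_{cpt}(Y)$ is given the compact-open topology induced from $\beta Y$. For compact $K\subseteq Y$, $\operatorname{Homeo}_K(Y)$ is the subgroup of homeomorphisms fixing every point outside $K$. $Y$ has CSHP if the colimit space topology on $\bigcup_{K\in\mathscr K(Y)}\operatorname{Homeo}_K(Y)=\operatorname{Homeo}_{cpt}(Y)$, namely $\{U\mid U\cap\operatorname{Homeo}_K(Y)\text{ open in }\operatorname{Homeo}_K(Y)\ \forall K\}$ ($\mathscr K(Y)$ the compact subsets of $Y$), coincides with the topology of $\operatorname{Homeo}_{cpt}(Y)$. *)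

theory Defs
  imports "HOL-Analysis.Analysis"
begin

definition tychonoff_space :: "'a topology \<Rightarrow> bool" where
  "tychonoff_space X \<longleftrightarrow> completely_regular_space X \<and> Hausdorff_space X"

text \<open>Stone-Cech compactification, by the standard construction: closure of the
  evaluation image of Y in the cube [0,1]^C, C = continuous maps Y \<rightarrow> [0,1].\<close>
definition sc_funs :: "'a topology \<Rightarrow> ('a \<Rightarrow> real) set" where
  "sc_funs Y = {f \<in> extensional (topspace Y). continuous_map Y (top_of_set {0..1}) f}"

definition sc_cube :: "'a topology \<Rightarrow> (('a \<Rightarrow> real) \<Rightarrow> real) topology" where
  "sc_cube Y = product_topology (\<lambda>_. top_of_set {0..1}) (sc_funs Y)"

definition sc_embed :: "'a topology \<Rightarrow> 'a \<Rightarrow> (('a \<Rightarrow> real) \<Rightarrow> real)" where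
  "sc_embed Y y = (\<lambda>f\<in>sc_funs Y. f y)"

definition stone_cech :: "'a topology \<Rightarrow> (('a \<Rightarrow> real) \<Rightarrow> real) topology" where
  "stone_cech Y = subtopology (sc_cube Y) ((sc_cube Y) closure_of (sc_embed Y ` topspace Y))"

text \<open>The (unique continuous) extension of a homeomorphism h of Y to the Stone-Cech
  compactification: it satisfies beta_ext Y h (sc_embed Y y) = sc_embed Y (h y).\<close>
definition beta_ext :: "'a topology \<Rightarrow> ('a \<Rightarrow> 'a) \<Rightarrow> (('a \<Rightarrow> real) \<Rightarrow> real) \<Rightarrow> (('a \<Rightarrow> real) \<Rightarrow> real)" where
  "beta_ext Y h = (\<lambda>p\<in>topspace (stone_cech Y). \<lambda>f\<in>sc_funs Y. p (f \<circ> h))"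

text \<open>Support of a map and compactly supported homeomorphisms (normalised to be the
  identity outside the carrier, so that they are genuine elements of a group).\<close>
definition supp_of :: "'a topology \<Rightarrow> ('a \<Rightarrow> 'a) \<Rightarrow> 'a set" where
  "supp_of Y h = Y closure_of {y \<in> topspace Y. h y \<noteq> y}"

definition Homeo_cpt :: "'a topology \<Rightarrow> ('a \<Rightarrow> 'a) set" where
  "Homeo_cpt Y = {h. homeomorphic_map Y Y h \<and> compactin Y (supp_of Y h)
                     \<and> (\<forall>x. x \<notin> topspace Y \<longrightarrow> h x = x)}"

definition Homeo_K :: "'a topology \<Rightarrow> 'a set \<Rightarrow> ('a \<Rightarrow> 'a) set" where
  "Homeo_K Y K = {h \<in> Homeo_cpt Y. \<forall>y \<in> topspace Y - K. h y = y}"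

text \<open>Compact-open topology on Homeo_cpt(Y), induced from the extensions to beta Y.\<close>
definition homeo_cpt_topology :: "'a topology \<Rightarrow> ('a \<Rightarrow> 'a) topology" where
  "homeo_cpt_topology Y = topology_generated_by
     {{h \<in> Homeo_cpt Y. beta_ext Y h ` K \<subseteq> U} | K U.
        compactin (stone_cech Y) K \<and> openin (stone_cech Y) U}"

text \<open>CSHP: the colimit topology over the compact subsets coincides with the given one.\<close>
definition CSHP :: "'a topology \<Rightarrow> bool" where
  "CSHP Y \<longleftrightarrow>
     (\<forall>U \<subseteq> Homeo_cpt Y.
        openin (homeo_cpt_topology Y) U \<longleftrightarrow>
        (\<forall>K. compactin Y K \<longrightarrow>
             openin (subtopology (homeo_cpt_topology Y) (Homeo_K Y K)) (U \<inter> Homeo_K Y K)))"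

end

theory Submission
  imports Defs
begin

text \<open>Let \<open>U\<close> be the set of compactly supported homeomorphisms fixing the infinite clopen
  discrete set \<open>D\<close> pointwise. A compact set meets \<open>D\<close> in finitely many points, and fixing an
  isolated point \<open>x\<close> is an open condition (test the extension to \<open>\<beta>X\<close> at \<open>x\<close> against the
  indicator function of \<open>{x}\<close>), so \<open>U\<close> meets every \<open>Homeo_K(X)\<close> in a relatively open set.
  But a subbasic neighbourhood \<open>{h. \<beta>h(C) \<subseteq> W}\<close> of the identity contains the transposition of
  any two isolated points whose images in \<open>\<beta>X\<close> are not separated by \<open>W\<close>. Hence every
  neighbourhood of the identity contains the transpositions of all pairs in \<open>D\<close> not separated by
  some finite family of sets, and by the pigeonhole principle such a pair exists: \<open>U\<close> is not open.\<close>

lemma sc_funs_comp_Homeo_cpt: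
  assumes "h \<in> Homeo_cpt Y" "f \<in> sc_funs Y"
  shows "f \<circ> h \<in> sc_funs Y"
proof -
  have "continuous_map Y (top_of_set {0..1}) (f \<circ> h)"
    using assms continuous_map_compose homeomorphic_imp_continuous_map
    unfolding sc_funs_def Homeo_cpt_def by blast
  moreover have "f \<circ> h \<in> extensional (topspace Y)"
    using assms unfolding sc_funs_def Homeo_cpt_def extensional_def by auto
  ultimately show ?thesis unfolding sc_funs_def by auto
qed

lemma sc_funs_indicator:
  assumes "openin Y S" "closedin Y S"
  shows "restrict (indicator S) (topspace Y) \<in> sc_funs Y"
proof -
  let ?f = "restrict (indicator S) (topspace Y) :: 'a \<Rightarrow> real"
  have "continuous_map Y (top_of_set {0..1}) ?f"
    unfolding continuous_map
  proof (intro conjI allI impI)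
    show "?f ` topspace Y \<subseteq> topspace (top_of_set {0..1})"
      by (auto simp: indicator_def)
    fix U :: "real set"
    have "{x \<in> topspace Y. ?f x \<in> U} =
        (if 1 \<in> U then S else {}) \<union> (if 0 \<in> U then topspace Y - S else {})"
      using openin_subset[OF assms(1)] by (auto simp: indicator_def)
    then show "openin Y {x \<in> topspace Y. ?f x \<in> U}"
      using assms by (auto intro!: openin_Un openin_diff)
  qed
  then show ?thesis unfolding sc_funs_def by auto
qed

lemma sc_embed_in_sc_cube: "y \<in> topspace Y \<Longrightarrow> sc_embed Y y \<in> topspace (sc_cube Y)"
  using continuous_map_image_subset_topspace
  unfolding sc_funs_def sc_cube_def sc_embed_def by fastforce

lemma Hausdorff_space_sc_cube: "Hausdorff_space (sc_cube Y)"
  unfolding sc_cube_def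
  by (simp add: Hausdorff_space_product_topology Hausdorff_space_subtopology)

lemma topspace_stone_cech:
  "topspace (stone_cech Y) = sc_cube Y closure_of (sc_embed Y ` topspace Y)"
  unfolding stone_cech_def by (simp add: closure_of_subset_topspace inf.absorb2)

lemma sc_embed_in_stone_cech: "y \<in> topspace Y \<Longrightarrow> sc_embed Y y \<in> topspace (stone_cech Y)"
  unfolding topspace_stone_cech
  by (rule closure_of_subset[THEN subsetD]) (use sc_embed_in_sc_cube in auto)

lemma stone_cech_extensional:
  "p \<in> topspace (stone_cech Y) \<Longrightarrow> p \<in> extensional (sc_funs Y)"
  unfolding stone_cech_def sc_cube_def by (auto simp: PiE_def)

lemma continuous_map_stone_cech_eval:
  "f \<in> sc_funs Y \<Longrightarrow> continuous_map (stone_cech Y) euclideanreal (\<lambda>p. p f)"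
  unfolding stone_cech_def sc_cube_def
  by (metis continuous_map_from_subtopology continuous_map_in_subtopology
      continuous_map_product_projection)

lemma beta_ext_sc_embed:
  assumes "h \<in> Homeo_cpt Y" "y \<in> topspace Y"
  shows "beta_ext Y h (sc_embed Y y) = sc_embed Y (h y)"
  using sc_funs_comp_Homeo_cpt[OF assms(1)] sc_embed_in_stone_cech[OF assms(2)]
  unfolding beta_ext_def sc_embed_def by (auto simp: restrict_def)

lemma beta_ext_id: "p \<in> topspace (stone_cech Y) \<Longrightarrow> beta_ext Y id p = p"
  using stone_cech_extensional unfolding beta_ext_def
  by (fastforce simp: restrict_def extensional_def)

lemma id_in_Homeo_cpt: "id \<in> Homeo_cpt Y"
  unfolding Homeo_cpt_def supp_of_def by auto

lemma Homeo_cpt_image: "h \<in> Homeo_cpt Y \<Longrightarrow> y \<in> topspace Y \<Longrightarrow> h y \<in> topspace Y"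
  unfolding Homeo_cpt_def using homeomorphic_imp_surjective_map by blast

lemma topspace_homeo_cpt_topology: "topspace (homeo_cpt_topology Y) = Homeo_cpt Y"
proof -
  have "\<exists>K U. Homeo_cpt Y = {h \<in> Homeo_cpt Y. beta_ext Y h ` K \<subseteq> U}
          \<and> compactin (stone_cech Y) K \<and> openin (stone_cech Y) U"
    by (intro exI[of _ "{}"]) auto
  then show ?thesis
    unfolding homeo_cpt_topology_def topology_generated_by_topspace by auto
qed

lemma openin_homeo_cpt_topology_subbasic:
  "compactin (stone_cech Y) C \<Longrightarrow> openin (stone_cech Y) W \<Longrightarrow>
     openin (homeo_cpt_topology Y) {h \<in> Homeo_cpt Y. beta_ext Y h ` C \<subseteq> W}"
  unfolding homeo_cpt_topology_def by (rule topology_generated_by_Basis) blast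

lemma openin_stabilizer_isolated:
  assumes "t1_space Y" "x \<in> topspace Y" "openin Y {x}"
  shows "openin (homeo_cpt_topology Y) {h \<in> Homeo_cpt Y. h x = x}"
proof -
  define f :: "'a \<Rightarrow> real" where "f = restrict (indicator {x}) (topspace Y)"
  have f: "f \<in> sc_funs Y"
    unfolding f_def using assms by (intro sc_funs_indicator) (auto intro: closedin_t1_singleton)
  define W where "W = {p \<in> topspace (stone_cech Y). p f \<in> {1/2<..}}"
  have W: "openin (stone_cech Y) W"
    unfolding W_def by (rule openin_continuous_map_preimage[OF continuous_map_stone_cech_eval[OF f]]) auto
  have "sc_embed Y y \<in> W \<longleftrightarrow> y = x" if "y \<in> topspace Y" for y
    using that f sc_embed_in_stone_cech[OF that] assms(2)
    unfolding W_def sc_embed_def f_def by (auto simp: indicator_def)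
  then have eq: "{h \<in> Homeo_cpt Y. h x = x} =
      {h \<in> Homeo_cpt Y. beta_ext Y h ` {sc_embed Y x} \<subseteq> W}"
    using assms(2) by (auto simp: beta_ext_sc_embed Homeo_cpt_image)
  have "compactin (stone_cech Y) {sc_embed Y x}"
    using assms(2) by (simp add: sc_embed_in_stone_cech)
  then show ?thesis
    unfolding eq using W by (rule openin_homeo_cpt_topology_subbasic)
qed

lemma transpose_in_Homeo_cpt:
  assumes "t1_space X" "x \<in> topspace X" "y \<in> topspace X" "openin X {x}" "openin X {y}"
  shows "Transposition.transpose x y \<in> Homeo_cpt X"
proof -
  let ?t = "Transposition.transpose x y"
  have cxy: "closedin X {x, y}"
    using closedin_Un[OF closedin_t1_singleton closedin_t1_singleton] assms(1-3)
    by (metis insert_is_Un)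
  have "continuous_map X X ?t"
    unfolding continuous_map
  proof (intro conjI allI impI)
    show "?t ` topspace X \<subseteq> topspace X"
      using assms by (auto simp: Transposition.transpose_def)
    fix U assume U: "openin X U"
    have eq: "{z \<in> topspace X. ?t z \<in> U} =
       (U - {x, y}) \<union> (if y \<in> U then {x} else {}) \<union> (if x \<in> U then {y} else {})"
      using assms openin_subset[OF U] by (auto simp: Transposition.transpose_def)
    have "openin X (U - {x, y})"
      using U cxy by (rule openin_diff)
    then show "openin X {z \<in> topspace X. ?t z \<in> U}"
      unfolding eq using assms by (intro openin_Un) auto
  qed
  then have "homeomorphic_map X X ?t"
    by (rule homeomorphic_map_involution) simp
  moreover have "compactin X (supp_of X ?t)"
  proof (rule closed_compactin)
    show "compactin X {x, y}"
      using assms(2,3) by (simp add: finite_imp_compactin)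
    show "supp_of X ?t \<subseteq> {x, y}"
      unfolding supp_of_def
      by (rule closure_of_minimal[OF _ cxy]) (auto simp: Transposition.transpose_def)
  qed (simp add: supp_of_def)
  moreover have "\<forall>z. z \<notin> topspace X \<longrightarrow> ?t z = z"
    using assms(2,3) by (auto simp: Transposition.transpose_def)
  ultimately show ?thesis unfolding Homeo_cpt_def by blast
qed

text \<open>Every other point of \<open>\<beta>X\<close> lies in the closure of the image of \<open>X - {x, y}\<close>, on which
  the transposition is the identity.\<close>

lemma beta_ext_transpose_other:
  assumes "x \<in> topspace X" "y \<in> topspace X" "Transposition.transpose x y \<in> Homeo_cpt X"
    and p: "p \<in> topspace (stone_cech X)" "p \<noteq> sc_embed X x" "p \<noteq> sc_embed X y"
  shows "beta_ext X (Transposition.transpose x y) p = p"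
proof -
  let ?C = "sc_cube X" and ?e = "sc_embed X" and ?t = "Transposition.transpose x y"
  have fin: "closedin ?C {?e x, ?e y}"
    using assms Hausdorff_imp_t1_space[OF Hausdorff_space_sc_cube] sc_embed_in_sc_cube
    by (metis closedin_Un closedin_t1_singleton insert_is_Un)
  have "?e ` topspace X = ?e ` (topspace X - {x, y}) \<union> {?e x, ?e y}"
    using assms by auto
  then have "p \<in> ?C closure_of (?e ` (topspace X - {x, y}) \<union> {?e x, ?e y})"
    using p(1) unfolding topspace_stone_cech by metis
  then have "p \<in> ?C closure_of (?e ` (topspace X - {x, y})) \<union> {?e x, ?e y}"
    unfolding closure_of_Un closure_of_closedin[OF fin] .
  then have p_closure: "p \<in> ?C closure_of (?e ` (topspace X - {x, y}))"
    using p by auto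
  have "p (f \<circ> ?t) = p f" if f: "f \<in> sc_funs X" for f
  proof -
    have ft: "f \<circ> ?t \<in> sc_funs X" using sc_funs_comp_Homeo_cpt[OF assms(3) f] .
    have "closedin ?C {q \<in> topspace ?C. q (f \<circ> ?t) = q f}"
      using f ft unfolding sc_cube_def
      by (intro closedin_continuous_maps_eq[of "top_of_set {0..1::real}"])
        (auto intro!: continuous_map_product_projection Hausdorff_space_subtopology)
    moreover have "?e ` (topspace X - {x, y}) \<subseteq> {q \<in> topspace ?C. q (f \<circ> ?t) = q f}"
      using sc_embed_in_sc_cube f ft unfolding sc_embed_def by auto
    ultimately show ?thesis using p_closure closure_of_minimal by blast
  qed
  then show ?thesis
    using p(1) stone_cech_extensional[OF p(1)]
    unfolding beta_ext_def by (auto simp: restrict_def extensional_def)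
qed

lemma transpose_in_subbasic_nbhd_id:
  assumes "t1_space X" "x \<in> topspace X" "y \<in> topspace X" "openin X {x}" "openin X {y}"
    and "compactin (stone_cech X) C" "C \<subseteq> W"
    and "sc_embed X x \<in> W \<longleftrightarrow> sc_embed X y \<in> W"
  shows "Transposition.transpose x y \<in> {h \<in> Homeo_cpt X. beta_ext X h ` C \<subseteq> W}"
proof -
  let ?t = "Transposition.transpose x y"
  have t: "?t \<in> Homeo_cpt X" using transpose_in_Homeo_cpt assms(1-5) .
  have "beta_ext X ?t p \<in> W" if "p \<in> C" for p
  proof -
    have "p \<in> topspace (stone_cech X)"
      using that compactin_subset_topspace[OF assms(6)] by auto
    then consider "p = sc_embed X x" | "p = sc_embed X y" | "beta_ext X ?t p = p"
      using beta_ext_transpose_other[OF assms(2,3) t] by blast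
    then show ?thesis
      using that assms beta_ext_sc_embed[OF t] by cases auto
  qed
  then show ?thesis using t by blast
qed

lemma generate_topology_on_nbhd_induct:
  assumes "generate_topology_on S G" "z \<in> G"
    and "\<And>s. s \<in> S \<Longrightarrow> z \<in> s \<Longrightarrow> P s"
    and "\<And>a b. P a \<Longrightarrow> P b \<Longrightarrow> P (a \<inter> b)"
    and "\<And>a b. P a \<Longrightarrow> a \<subseteq> b \<Longrightarrow> P b"
  shows "P G"
  using assms(1,2)
proof (induction rule: generate_topology_on.induct)
  case (UN K)
  then obtain k where "k \<in> K" "z \<in> k" by blast
  then show ?case using UN.IH assms(5) by blast
qed (use assms(3,4) in auto)

lemma infinite_indiscernible_pair:
  assumes "infinite D" "finite F"
  obtains x y where "x \<in> D" "y \<in> D" "x \<noteq> y" "\<forall>A\<in>F. x \<in> A \<longleftrightarrow> y \<in> A"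
proof -
  let ?g = "\<lambda>x. {A \<in> F. x \<in> A}"
  have "finite (?g ` D)"
    using assms(2) by (rule finite_subset[rotated, OF finite_Pow_iff[THEN iffD2]]) auto
  then have "\<not> inj_on ?g D" using assms(1) finite_imageD by blast
  then show ?thesis using that unfolding inj_on_def by blast
qed

definition contains_unseparated_transpositions :: "'a set \<Rightarrow> 'a set set \<Rightarrow> ('a \<Rightarrow> 'a) set \<Rightarrow> bool"
  where "contains_unseparated_transpositions D F G \<longleftrightarrow>
    (\<forall>x\<in>D. \<forall>y\<in>D. x \<noteq> y \<longrightarrow> (\<forall>A\<in>F. x \<in> A \<longleftrightarrow> y \<in> A) \<longrightarrow> Transposition.transpose x y \<in> G)"

lemma contains_unseparated_transpositions_Int:
  assumes "contains_unseparated_transpositions D F G" "contains_unseparated_transpositions D F' G'"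
  shows "contains_unseparated_transpositions D (F \<union> F') (G \<inter> G')"
  unfolding contains_unseparated_transpositions_def
proof (intro ballI impI)
  fix x y assume "x \<in> D" "y \<in> D" "x \<noteq> y" "\<forall>A\<in>F \<union> F'. x \<in> A \<longleftrightarrow> y \<in> A"
  then show "Transposition.transpose x y \<in> G \<inter> G'"
    using assms unfolding contains_unseparated_transpositions_def by simp
qed

lemma contains_unseparated_transpositions_mono:
  assumes "contains_unseparated_transpositions D F G" "G \<subseteq> G'"
  shows "contains_unseparated_transpositions D F G'"
  using assms unfolding contains_unseparated_transpositions_def by (simp add: subset_iff)

lemma nbhd_id_contains_unseparated_transpositions:
  assumes "t1_space X" "D \<subseteq> topspace X" "\<forall>x\<in>D. openin X {x}"
    and "openin (homeo_cpt_topology X) G" "id \<in> G"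
  shows "\<exists>F. finite F \<and> contains_unseparated_transpositions D F G"
proof -
  let ?S = "{{h \<in> Homeo_cpt X. beta_ext X h ` K \<subseteq> U} | K U.
              compactin (stone_cech X) K \<and> openin (stone_cech X) U}"
  have "generate_topology_on ?S G"
    using assms(4) unfolding homeo_cpt_topology_def by (rule openin_topology_generated_by)
  then show ?thesis
  proof (rule generate_topology_on_nbhd_induct
      [where P = "\<lambda>G. \<exists>F. finite F \<and> contains_unseparated_transpositions D F G"])
    show "id \<in> G" by fact
  next
    fix s assume "s \<in> ?S" "id \<in> s"
    then obtain C W where s: "s = {h \<in> Homeo_cpt X. beta_ext X h ` C \<subseteq> W}"
      and C: "compactin (stone_cech X) C" and "beta_ext X id ` C \<subseteq> W"
      by blast
    have "C \<subseteq> W"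
    proof
      fix p assume "p \<in> C"
      then have "p \<in> topspace (stone_cech X)" "beta_ext X id p \<in> W"
        using \<open>beta_ext X id ` C \<subseteq> W\<close> compactin_subset_topspace[OF C] by auto
      then show "p \<in> W" by (simp add: beta_ext_id)
    qed
    have "Transposition.transpose x y \<in> s"
      if xy: "x \<in> D" "y \<in> D" "sc_embed X x \<in> W \<longleftrightarrow> sc_embed X y \<in> W" for x y
    proof -
      have "x \<in> topspace X" "y \<in> topspace X" using assms(2) xy(1,2) by auto
      then show ?thesis
        unfolding s by (rule transpose_in_subbasic_nbhd_id[OF assms(1) _ _
            assms(3)[rule_format, OF xy(1)] assms(3)[rule_format, OF xy(2)] C \<open>C \<subseteq> W\<close> xy(3)])
    qed
    then have "contains_unseparated_transpositions D {{x. sc_embed X x \<in> W}} s"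
      unfolding contains_unseparated_transpositions_def by simp
    then show "\<exists>F. finite F \<and> contains_unseparated_transpositions D F s"
      by blast
  next
    fix a b
    assume "\<exists>F. finite F \<and> contains_unseparated_transpositions D F a"
      and "\<exists>F. finite F \<and> contains_unseparated_transpositions D F b"
    then show "\<exists>F. finite F \<and> contains_unseparated_transpositions D F (a \<inter> b)"
      by (meson contains_unseparated_transpositions_Int finite_UnI)
  next
    fix a b
    assume "\<exists>F. finite F \<and> contains_unseparated_transpositions D F a" and "a \<subseteq> b"
    then show "\<exists>F. finite F \<and> contains_unseparated_transpositions D F b"
      by (meson contains_unseparated_transpositions_mono)
  qed
qed

lemma stabilizer_not_openin:
  assumes "t1_space X" "infinite D" "D \<subseteq> topspace X" "\<forall>x\<in>D. openin X {x}"
  shows "\<not> openin (homeo_cpt_topology X) {h \<in> Homeo_cpt X. \<forall>x\<in>D. h x = x}"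
proof
  let ?U = "{h \<in> Homeo_cpt X. \<forall>x\<in>D. h x = x}"
  assume "openin (homeo_cpt_topology X) ?U"
  moreover have "id \<in> ?U" by (simp add: id_in_Homeo_cpt)
  ultimately have "\<exists>F. finite F \<and> contains_unseparated_transpositions D F ?U"
    by (rule nbhd_id_contains_unseparated_transpositions[OF assms(1,3,4)])
  then obtain F where "finite F" and F: "contains_unseparated_transpositions D F ?U"
    by blast
  obtain x y where xy: "x \<in> D" "y \<in> D" "x \<noteq> y" "\<forall>A\<in>F. x \<in> A \<longleftrightarrow> y \<in> A"
    using infinite_indiscernible_pair[OF assms(2) \<open>finite F\<close>] .
  then have "Transposition.transpose x y \<in> ?U"
    using F unfolding contains_unseparated_transpositions_def by blast
  then have "Transposition.transpose x y x = x" using xy(1) by blast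
  with xy(3) show False by simp
qed

lemma finite_Int_compactin_closed_discrete:
  assumes "closedin X D" "subtopology X D = discrete_topology D" "compactin X K"
  shows "finite (D \<inter> K)"
proof -
  have "compactin (subtopology X D) (D \<inter> K)"
    using closed_Int_compactin[OF assms(1,3)] by (simp add: compactin_subtopology)
  then show ?thesis unfolding assms(2) by (simp add: compactin_discrete_topology)
qed

lemma stabilizer_openin_Homeo_K:
  assumes "t1_space X" "D \<subseteq> topspace X" "\<forall>x\<in>D. openin X {x}" "finite (D \<inter> K)"
  shows "openin (subtopology (homeo_cpt_topology X) (Homeo_K X K))
           ({h \<in> Homeo_cpt X. \<forall>x\<in>D. h x = x} \<inter> Homeo_K X K)"
proof -
  let ?T = "homeo_cpt_topology X"
  let ?V = "(\<Inter>x\<in>D \<inter> K. {h \<in> Homeo_cpt X. h x = x}) \<inter> topspace ?T"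
  have "openin ?T ?V"
  proof (rule openin_INT[OF assms(4)])
    show "openin ?T {h \<in> Homeo_cpt X. h x = x}" if "x \<in> D \<inter> K" for x
      using that assms(2,3) by (intro openin_stabilizer_isolated[OF assms(1)]) auto
  qed
  moreover have "{h \<in> Homeo_cpt X. \<forall>x\<in>D. h x = x} \<inter> Homeo_K X K = ?V \<inter> Homeo_K X K"
    using assms(2) unfolding Homeo_K_def topspace_homeo_cpt_topology by auto
  ultimately show ?thesis unfolding openin_subtopology by blast
qed

theorem corollary5p6:
  fixes X :: "'a topology"
  assumes "tychonoff_space X"
    and "\<exists>D. D \<subseteq> topspace X \<and> infinite D \<and> openin X D \<and> closedin X D
              \<and> subtopology X D = discrete_topology D"
  shows "\<not> CSHP X"
proof -
  obtain D where D: "D \<subseteq> topspace X" "infinite D" "openin X D" "closedin X D"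
    and discrete: "subtopology X D = discrete_topology D"
    using assms(2) by blast
  have t1: "t1_space X"
    using assms(1) Hausdorff_imp_t1_space unfolding tychonoff_space_def by blast
  have isolated: "\<forall>x\<in>D. openin X {x}"
    using openin_trans_full[OF _ D(3)] discrete by auto
  let ?U = "{h \<in> Homeo_cpt X. \<forall>x\<in>D. h x = x}"
  have "\<not> openin (homeo_cpt_topology X) ?U"
    by (rule stabilizer_not_openin[OF t1 D(2,1) isolated])
  moreover have "openin (subtopology (homeo_cpt_topology X) (Homeo_K X K)) (?U \<inter> Homeo_K X K)"
    if "compactin X K" for K
    using finite_Int_compactin_closed_discrete[OF D(4) discrete that]
    by (rule stabilizer_openin_Homeo_K[OF t1 D(1) isolated])
  moreover have "?U \<subseteq> Homeo_cpt X" by blast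
  ultimately show ?thesis unfolding CSHP_def by blast
qed

end
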